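(* For any finite nonempty sets $X,Y,Z,W \subseteq \mathbb{Z}$, \[ |X+Y| \;\le\; \frac{|X+Z|\cdot|Z+W|\cdot|W+Y|}{|Z|\cdot|W|}. \]
   Context: For sets $P,Q\subseteq\mathbb{Z}$, $P+Q=\{p+q : p\in P,\ q\in Q\}$. *)

theory Defs
  imports Complex_Main
begin

definition sumset :: "int set \<Rightarrow> int set \<Rightarrow> int set" where
  "sumset P Q = {p + q | p q. p \<in> P \<and> q \<in> Q}"

end

theory Submission
  imports Defs
begin

text \<open>Fix for every \<open>s \<in> X + Y\<close> a representation \<open>s = x\<^sub>s + y\<^sub>s\<close>. The map
  \<open>(s, z, w) \<mapsto> (x\<^sub>s + z, z + w, w + y\<^sub>s)\<close> sends \<open>(X + Y) \<times> Z \<times> W\<close> into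
  \<open>(X + Z) \<times> (Z + W) \<times> (W + Y)\<close>, and it is injective because the alternating sum
  of the three coordinates returns \<open>s\<close>, after which \<open>z\<close> and \<open>w\<close> are determined.\<close>

lemma sumset_eq_image: "sumset P Q = (\<lambda>(p, q). p + q) ` (P \<times> Q)"
  unfolding sumset_def by auto

lemma finite_sumset: "finite P \<Longrightarrow> finite Q \<Longrightarrow> finite (sumset P Q)"
  unfolding sumset_eq_image by simp

lemma add_in_sumset: "p \<in> P \<Longrightarrow> q \<in> Q \<Longrightarrow> p + q \<in> sumset P Q"
  unfolding sumset_def by blast

lemma sumset_representation:
  obtains r where "\<And>s. s \<in> sumset P Q \<Longrightarrow> r s \<in> P \<and> s - r s \<in> Q"
proof -
  have "\<forall>s \<in> sumset P Q. \<exists>p. p \<in> P \<and> s - p \<in> Q"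
    unfolding sumset_def by force
  then show thesis using bchoice that by metis
qed

lemma card_sumset_mult_le:
  fixes X Y Z W :: "int set"
  assumes "finite X" "finite Y" "finite Z" "finite W"
  shows "card (sumset X Y) * card Z * card W \<le>
    card (sumset X Z) * card (sumset Z W) * card (sumset W Y)"
proof -
  obtain r where r: "\<And>s. s \<in> sumset X Y \<Longrightarrow> r s \<in> X \<and> s - r s \<in> Y"
    using sumset_representation by blast
  define f where "f = (\<lambda>(s, z, w). (r s + z, z + w, w + (s - r s)))"
  have inj: "inj_on f (sumset X Y \<times> Z \<times> W)"
  proof (rule inj_onI)
    fix u u'
    assume "f u = f u'"
    moreover obtain s z w s' z' w' where u: "u = (s, z, w)" "u' = (s', z', w')"
      by (cases u, cases u') auto
    ultimately have eq: "r s + z = r s' + z'" "z + w = z' + w'"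
      "w + (s - r s) = w' + (s' - r s')"
      unfolding f_def by auto
    then have "s = s'" by (simp add: algebra_simps)
    with eq show "u = u'" unfolding u by auto
  qed
  have "f ` (sumset X Y \<times> Z \<times> W) \<subseteq> sumset X Z \<times> sumset Z W \<times> sumset W Y"
  proof (rule image_subsetI)
    fix u assume "u \<in> sumset X Y \<times> Z \<times> W"
    then obtain s z w where "u = (s, z, w)" "s \<in> sumset X Y" "z \<in> Z" "w \<in> W"
      by auto
    with r[of s] show "f u \<in> sumset X Z \<times> sumset Z W \<times> sumset W Y"
      unfolding f_def by (simp add: add_in_sumset)
  qed
  from card_inj_on_le[OF inj this]
  have "card (sumset X Y \<times> Z \<times> W) \<le> card (sumset X Z \<times> sumset Z W \<times> sumset W Y)"
    by (simp add: finite_sumset assms)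
  then show ?thesis by (simp add: card_cartesian_product mult.assoc)
qed

theorem mainTheorem1:
  fixes X Y Z W :: "int set"
  assumes "finite X" "finite Y" "finite Z" "finite W"
    and "X \<noteq> {}" "Y \<noteq> {}" "Z \<noteq> {}" "W \<noteq> {}"
  shows "real (card (sumset X Y)) \<le>
    real (card (sumset X Z)) * real (card (sumset Z W)) * real (card (sumset W Y))
      / (real (card Z) * real (card W))"
proof -
  have "real (card Z) * real (card W) > 0"
    using assms by (simp add: card_gt_0_iff)
  moreover have "real (card (sumset X Y)) * (real (card Z) * real (card W)) \<le>
      real (card (sumset X Z)) * real (card (sumset Z W)) * real (card (sumset W Y))"
    using card_sumset_mult_le[OF assms(1-4)]
    by (simp only: of_nat_le_iff flip: of_nat_mult mult.assoc)
  ultimately show ?thesis by (simp add: pos_le_divide_eq)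
qed

end
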